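(* Let $m\ge0$ and let $f:\mathbb{R}^n\to\mathbb{R}$ be $m$-weakly convex and $L$-Lipschitz continuous with $f^\star:=\inf_xf(x)>-\infty$. Run the proximal descent method (defined in the context) with $\beta\in(0,1)$, $\rho>0$, $\alpha=m+\rho$, from $x_1\in\mathbb{R}^n$. Let $\eta>0$, $\epsilon>0$, and let $k^\star$ be the smallest index such that $x_{k^\star}$ is an $(\eta,\epsilon)$-inexact stationary point. Then $k^\star\le K_{\max}(\eta,\epsilon)+1$ and the total number of function and subgradient evaluations performed before reaching $x_{k^\star}$ satisfies $$\sum_{i=1}^{k^\star-1}T_i\le\frac{8K_{\max}(\eta,\epsilon)}{(1-\beta)^2\rho}\Big(1+\frac m\rho\Big)^2L^2\max\Big\{\frac{2\rho}{\eta^2},\frac1\epsilon\Big\},$$ where $K_{\max}(\eta,\epsilon)=\Big\lceil\frac{2\alpha^2(f(x_1)-f^\star)}{m+\beta\rho}\frac1{\eta^2}+\frac{(1-\beta)(f(x_1)-f^\star)}{\beta}\frac1\epsilon+1\Big\rceil$.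
   Context: A function $f$ is $m$-weakly convex ($m\ge 0$) if $x\mapsto f(x)+\frac{m}{2}\|x\|^2$ is convex; its subdifferential is $\partial f(x)=\{v: f(y)\ge f(x)+\langle v,y-x\rangle-\frac{m}{2}\|y-x\|^2\ \forall y\}$, and for $\epsilon\ge0$, $\partial_\epsilon f(x)=\{v: f(y)\ge f(x)+\langle v,y-x\rangle-\frac{m}{2}\|y-x\|^2-\epsilon\ \forall y\}$. A point $x$ is an $(\eta,\epsilon)$-inexact stationary point if $\mathrm{dist}(0,\partial_\epsilon f(x))\le\eta$. Subroutine ProxDescent$(x_k,\beta,\rho)$: set $j=1$, choose $g_1\in\partial f(x_k)$, let $\tilde f_1(x)=f(x_k)+\langle g_1,x-x_k\rangle$, and compute $z_2=\arg\min_x\{\tilde f_1(x)+\frac\rho2\|x-x_k\|^2\}$. While $f(x_k)-\big(f(z_{j+1})+\frac m2\|z_{j+1}-x_k\|^2\big)<\beta\big(f(x_k)-\tilde f_j(z_{j+1})\big)$: choose $g_{j+1}$ with $g_{j+1}-m(z_{j+1}-x_k)\in\partial f(z_{j+1})$ and a convex $\tilde f_{j+1}:\mathbb{R}^n\to\mathbb{R}$ such that for all $x$: (i) $\tilde f_{j+1}(x)\le f(x)+\frac m2\|x-x_k\|^2$; (ii) $\tilde f_{j+1}(x)\ge\tilde f_j(z_{j+1})+\langle s_{j+1},x-z_{j+1}\rangle$ with $s_{j+1}=\rho(x_k-z_{j+1})$; (iii) $\tilde f_{j+1}(x)\ge f(z_{j+1})+\frac m2\|z_{j+1}-x_k\|^2+\langle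 g_{j+1},x-z_{j+1}\rangle$; compute $z_{j+2}=\arg\min_x\{\tilde f_{j+1}(x)+\frac\rho2\|x-x_k\|^2\}$ and increase $j$ by one. On exit, return $z_{j+1}$. $T_k$ denotes the number of trial points $z_2,\dots,z_{T_k+1}$ computed in the call. The proximal descent method: given $x_1\in\mathbb{R}^n$, set $x_{k+1}=$ ProxDescent$(x_k,\beta,\rho)$ for $k=1,2,\dots$; each trial point costs one function value and one subgradient evaluation, so $\sum_i T_i$ counts evaluations. *)

theory Defs
  imports "HOL-Analysis.Analysis"
begin

definition wsubdiff :: "real \<Rightarrow> ('a::euclidean_space \<Rightarrow> real) \<Rightarrow> 'a \<Rightarrow> 'a set" where
  "wsubdiff m f x = {v. \<forall>y. f y \<ge> f x + inner v (y - x) - m / 2 * norm (y - x) ^ 2}"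

definition esubdiff :: "real \<Rightarrow> real \<Rightarrow> ('a::euclidean_space \<Rightarrow> real) \<Rightarrow> 'a \<Rightarrow> 'a set" where
  "esubdiff m eps f x = {v. \<forall>y. f y \<ge> f x + inner v (y - x) - m / 2 * norm (y - x) ^ 2 - eps}"

text \<open>(eta,eps)-inexact stationary point: dist(0, esubdiff) \<le> eta
  (distance to the empty set is +infinity, hence the nonemptiness requirement).\<close>
definition inexact_stationary :: "real \<Rightarrow> ('a::euclidean_space \<Rightarrow> real) \<Rightarrow> real \<Rightarrow> real \<Rightarrow> 'a \<Rightarrow> bool" where
  "inexact_stationary m f eta eps x \<longleftrightarrow>
     esubdiff m eps f x \<noteq> {} \<and> infdist 0 (esubdiff m eps f x) \<le> eta"

definition weakly_convex :: "real \<Rightarrow> ('a::euclidean_space \<Rightarrow> real) \<Rightarrow> bool" where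
  "weakly_convex m f \<longleftrightarrow> m \<ge> 0 \<and> convex_on UNIV (\<lambda>x. f x + m / 2 * norm x ^ 2)"

definition prox_min :: "real \<Rightarrow> 'a::euclidean_space \<Rightarrow> ('a \<Rightarrow> real) \<Rightarrow> 'a \<Rightarrow> bool" where
  "prox_min rho x h z \<longleftrightarrow> (\<forall>u. h z + rho / 2 * norm (z - x) ^ 2 \<le> h u + rho / 2 * norm (u - x) ^ 2)"

text \<open>The while-condition of ProxDescent evaluated at iteration j (trial point z (j+1)).\<close>
definition loop_test :: "real \<Rightarrow> real \<Rightarrow> ('a::euclidean_space \<Rightarrow> real) \<Rightarrow> 'a
    \<Rightarrow> (nat \<Rightarrow> 'a \<Rightarrow> real) \<Rightarrow> (nat \<Rightarrow> 'a) \<Rightarrow> nat \<Rightarrow> bool" where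
  "loop_test m beta f x ft z j \<longleftrightarrow>
     f x - (f (z (Suc j)) + m / 2 * norm (z (Suc j) - x) ^ 2) < beta * (f x - ft j (z (Suc j)))"

text \<open>A (possibly non-terminating) execution of ProxDescent(x, beta, rho):
  g j are the chosen subgradients, ft j the models, z (j+1) the trial points.
  Constraints are imposed only as long as the loop has not exited.\<close>
definition prox_descent_run :: "real \<Rightarrow> real \<Rightarrow> real \<Rightarrow> ('a::euclidean_space \<Rightarrow> real) \<Rightarrow> 'a
    \<Rightarrow> (nat \<Rightarrow> 'a) \<Rightarrow> (nat \<Rightarrow> 'a \<Rightarrow> real) \<Rightarrow> (nat \<Rightarrow> 'a) \<Rightarrow> bool" where
  "prox_descent_run m beta rho f x g ft z \<longleftrightarrow>
     g 1 \<in> wsubdiff m f x \<and>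
     ft 1 = (\<lambda>u. f x + inner (g 1) (u - x)) \<and>
     (\<forall>j\<ge>1. (\<forall>i\<in>{1..<j}. loop_test m beta f x ft z i) \<longrightarrow> prox_min rho x (ft j) (z (Suc j))) \<and>
     (\<forall>j\<ge>1. (\<forall>i\<in>{1..j}. loop_test m beta f x ft z i) \<longrightarrow>
        g (Suc j) - m *\<^sub>R (z (Suc j) - x) \<in> wsubdiff m f (z (Suc j)) \<and>
        convex_on UNIV (ft (Suc j)) \<and>
        (\<forall>u. ft (Suc j) u \<le> f u + m / 2 * norm (u - x) ^ 2) \<and>
        (\<forall>u. ft (Suc j) u \<ge> ft j (z (Suc j)) + inner (rho *\<^sub>R (x - z (Suc j))) (u - z (Suc j))) \<and>
        (\<forall>u. ft (Suc j) u \<ge> f (z (Suc j)) + m / 2 * norm (z (Suc j) - x) ^ 2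
                             + inner (g (Suc j)) (u - z (Suc j))))"

definition prox_terminates :: "real \<Rightarrow> real \<Rightarrow> ('a::euclidean_space \<Rightarrow> real) \<Rightarrow> 'a
    \<Rightarrow> (nat \<Rightarrow> 'a \<Rightarrow> real) \<Rightarrow> (nat \<Rightarrow> 'a) \<Rightarrow> bool" where
  "prox_terminates m beta f x ft z \<longleftrightarrow> (\<exists>j\<ge>1. \<not> loop_test m beta f x ft z j)"

text \<open>T = number of trial points z 2, ..., z (T+1) computed; the call returns z (T+1).\<close>
definition num_trials :: "real \<Rightarrow> real \<Rightarrow> ('a::euclidean_space \<Rightarrow> real) \<Rightarrow> 'a
    \<Rightarrow> (nat \<Rightarrow> 'a \<Rightarrow> real) \<Rightarrow> (nat \<Rightarrow> 'a) \<Rightarrow> nat" where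
  "num_trials m beta f x ft z = (LEAST j. j \<ge> 1 \<and> \<not> loop_test m beta f x ft z j)"

definition Kmax :: "real \<Rightarrow> real \<Rightarrow> real \<Rightarrow> real \<Rightarrow> real \<Rightarrow> real \<Rightarrow> int" where
  "Kmax m beta rho gap eta eps =
     \<lceil>2 * (m + rho) ^ 2 * gap / (m + beta * rho) * (1 / eta ^ 2)
       + (1 - beta) * gap / beta * (1 / eps) + 1\<rceil>"

end

theory Submission
  imports Defs
begin

text \<open>
  Inside one call ProxDescent(x, \<beta>, \<rho>) consider the gap \<Delta> j = f x - min_u (ft j u + \<rho>/2 norm (u - x)^2)
  between f x and the optimal value of the j-th proximal subproblem. It is nonnegative, and while the
  loop continues the two cutting planes (ii) and (iii), mixed with a well-chosen weight, force
  \<Delta> (j + 1) \<le> \<Delta> j - c (\<Delta> j)^2 with c = (1 - \<beta>)^2 \<rho>^3 / (8 (m + \<rho>)^2 L^2), so that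
  c j \<Delta> j \<le> 1. On the other hand \<rho> (x - z (j + 1)) is an approximate subgradient at x whose
  size and error are controlled by \<Delta> j; if x is not (\<eta>, \<epsilon>)-stationary, \<Delta> j therefore
  stays above min \<epsilon> (\<eta>^2 / (2 \<rho>)), which bounds the number of trials.

  When the loop exits, the descent test makes (m + \<rho>) (x - z) an approximate subgradient at the
  returned point z, with error at most (1 - \<beta>)/\<beta> times the decrease f x - f z. If z is not
  stationary either, the decrease is at least 1 / descent_rate; since f is bounded below this can
  happen at most K_max times.
\<close>

lemma le_of_le_add_small_multiple:
  fixes a b c :: real
  assumes small: "\<And>t. 0 < t \<Longrightarrow> t \<le> 1 \<Longrightarrow> b \<le> a + t * c" and "0 \<le> c"
  shows "b \<le> a"
proof (rule field_le_epsilon)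
  fix e :: real
  assume "0 < e"
  define t where "t = min 1 (e / (c + 1))"
  have t: "0 < t" "t \<le> 1"
    using \<open>0 < e\<close> \<open>0 \<le> c\<close> by (auto simp: t_def)
  have "t * c \<le> e / (c + 1) * c"
    using \<open>0 \<le> c\<close> by (intro mult_right_mono) (auto simp: t_def)
  also have "\<dots> \<le> e"
    using \<open>0 < e\<close> \<open>0 \<le> c\<close> by (simp add: field_simps)
  finally show "b \<le> a + e"
    using small[OF t] by linarith
qed

lemma power2_norm_add:
  fixes a b :: "'a::real_inner"
  shows "norm (a + b) ^ 2 = norm a ^ 2 + 2 * inner a b + norm b ^ 2"
  by (simp add: power2_norm_eq_inner inner_add_left inner_add_right inner_commute)

lemma complete_square_lower_bound:
  fixes d h :: "'a::real_inner"
  assumes "0 < rho"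
  shows "- (lam ^ 2 * norm h ^ 2 / (2 * rho)) \<le> rho / 2 * norm d ^ 2 + lam * inner h d"
proof -
  have "0 \<le> norm (rho *\<^sub>R d + lam *\<^sub>R h) ^ 2 / (2 * rho)"
    using assms by simp
  also have "\<dots> = rho / 2 * norm d ^ 2 + lam * inner h d + lam ^ 2 * norm h ^ 2 / (2 * rho)"
    using assms unfolding power2_norm_add
    by (simp add: power_mult_distrib inner_commute field_simps power2_eq_square)
  finally show ?thesis
    by simp
qed

lemma prox_min_optimality:
  fixes h :: "'a::euclidean_space \<Rightarrow> real"
  assumes convex: "convex_on UNIV h" and prox: "prox_min rho x h z" and "0 < rho"
  shows "h z + inner (rho *\<^sub>R (x - z)) (u - z) \<le> h u"
proof -
  have "rho * inner (x - z) (u - z) \<le> (h u - h z) + t * (rho / 2 * norm (u - z) ^ 2)"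
    if t: "0 < t" "t \<le> 1" for t
  proof -
    define v where "v = (1 - t) *\<^sub>R z + t *\<^sub>R u"
    define P where "P = inner (x - z) (u - z)"
    define N where "N = norm (u - z) ^ 2"
    have "norm (v - x) ^ 2 = norm ((z - x) + t *\<^sub>R (u - z)) ^ 2"
      by (simp add: v_def algebra_simps)
    also have "\<dots> = norm (z - x) ^ 2 + 2 * t * inner (z - x) (u - z) + t ^ 2 * N"
      unfolding power2_norm_add N_def by (simp add: power_mult_distrib)
    also have "inner (z - x) (u - z) = - P"
      unfolding P_def by (metis inner_minus_left minus_diff_eq)
    finally have "norm (v - x) ^ 2 = norm (z - x) ^ 2 - 2 * t * P + t ^ 2 * N"
      by simp
    then have "h z + rho / 2 * norm (z - x) ^ 2
        \<le> h v + rho / 2 * (norm (z - x) ^ 2 - 2 * t * P + t ^ 2 * N)"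
      using prox unfolding prox_min_def by metis
    moreover have "h v \<le> (1 - t) * h z + t * h u"
      unfolding v_def using convex_onD[OF convex, of t z u] t by simp
    ultimately have "t * (rho * P) \<le> t * ((h u - h z) + t * (rho / 2 * N))"
      by (simp add: algebra_simps power2_eq_square)
    then show ?thesis
      using t by (simp add: P_def N_def)
  qed
  moreover have "0 \<le> rho / 2 * norm (u - z) ^ 2"
    using \<open>0 < rho\<close> by simp
  ultimately have "rho * inner (x - z) (u - z) \<le> h u - h z"
    by (rule le_of_le_add_small_multiple)
  then show ?thesis
    by simp
qed

lemma wsubdiff_norm_le_lipschitz:
  fixes f :: "'a::euclidean_space \<Rightarrow> real"
  assumes lip: "lipschitz_on L UNIV f" and v: "v \<in> wsubdiff m f y" and "0 \<le> m"
  shows "norm v \<le> L"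
proof (cases "v = 0")
  case True
  then show ?thesis
    using lip by (simp add: lipschitz_on_def)
next
  case False
  have "norm v \<le> L + t * (m / 2 * norm v)" if t: "0 < t" "t \<le> 1" for t
  proof -
    have "f y + inner v ((y + t *\<^sub>R v) - y) - m / 2 * norm ((y + t *\<^sub>R v) - y) ^ 2 \<le> f (y + t *\<^sub>R v)"
      using v unfolding wsubdiff_def by blast
    then have "f y + t * norm v ^ 2 - t ^ 2 * (m / 2 * norm v ^ 2) \<le> f (y + t *\<^sub>R v)"
      using t by (simp add: power_mult_distrib power2_norm_eq_inner algebra_simps)
    moreover have "dist (f (y + t *\<^sub>R v)) (f y) \<le> L * dist (y + t *\<^sub>R v) y"
      using lip unfolding lipschitz_on_def by blast
    then have "f (y + t *\<^sub>R v) - f y \<le> L * (t * norm v)"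
      using t by (simp add: dist_norm abs_le_iff)
    ultimately have "t * norm v * norm v \<le> t * norm v * (L + t * (m / 2 * norm v))"
      by (simp add: algebra_simps power2_eq_square)
    then show ?thesis
      using t False by simp
  qed
  moreover have "0 \<le> m / 2 * norm v"
    using \<open>0 \<le> m\<close> by simp
  ultimately show ?thesis
    by (rule le_of_le_add_small_multiple)
qed

lemma inexact_stationaryI:
  assumes "v \<in> esubdiff m e f x" "e \<le> eps" "norm v \<le> eta"
  shows "inexact_stationary m f eta eps x"
proof -
  have "v \<in> esubdiff m eps f x"
    using assms(1,2) unfolding esubdiff_def by (force elim: order.trans[rotated])
  then show ?thesis
    using infdist_le[of v "esubdiff m eps f x" 0] assms(3) unfolding inexact_stationary_def by auto
qed

lemma index_mult_le_one_of_quadratic_decrease: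
  fixes D :: "nat \<Rightarrow> real"
  assumes "0 \<le> c" and "c * D 1 \<le> 1" and "1 \<le> n"
    and decrease: "\<And>j. 1 \<le> j \<Longrightarrow> j < n \<Longrightarrow> 0 \<le> D j \<and> D (Suc j) \<le> D j - c * D j ^ 2"
  shows "c * real n * D n \<le> 1"
  using \<open>1 \<le> n\<close> decrease
proof (induction n rule: nat_induct_at_least)
  case base
  then show ?case
    using \<open>c * D 1 \<le> 1\<close> by simp
next
  case (Suc n)
  define a where "a = c * D n"
  have D: "0 \<le> D n" "D (Suc n) \<le> D n - c * D n ^ 2"
    using Suc.prems[of n] Suc.hyps by auto
  have "real n * a \<le> 1"
    using Suc by (simp add: a_def mult_ac)
  moreover have "0 \<le> a"
    using \<open>0 \<le> c\<close> D by (simp add: a_def)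
  moreover have "1 * a \<le> real n * a"
    using Suc.hyps \<open>0 \<le> a\<close> by (intro mult_right_mono) auto
  ultimately have "a \<le> 1"
    by simp
  have "c * D (Suc n) \<le> a - a ^ 2"
    using mult_left_mono[OF D(2) \<open>0 \<le> c\<close>] by (simp add: a_def power2_eq_square algebra_simps)
  then have "real (Suc n) * (c * D (Suc n)) \<le> real (Suc n) * (a - a ^ 2)"
    by (rule mult_left_mono) simp
  then have "c * real (Suc n) * D (Suc n) \<le> real (Suc n) * (a - a ^ 2)"
    by (simp add: mult_ac)
  also have "\<dots> = (real n * a + a) * (1 - a)"
    by (simp add: power2_eq_square algebra_simps)
  also have "\<dots> \<le> (1 + a) * (1 - a)"
    using \<open>real n * a \<le> 1\<close> \<open>a \<le> 1\<close> by (intro mult_right_mono) auto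
  also have "\<dots> \<le> 1"
    by (simp add: algebra_simps)
  finally show ?case .
qed

lemma first_hit_index_le:
  fixes F :: "nat \<Rightarrow> real" and P :: "nat \<Rightarrow> bool"
  assumes lower: "\<And>k. Finf \<le> F k" and "0 \<le> A"
    and decrease: "\<And>k. 1 \<le> k \<Longrightarrow> \<not> P k \<Longrightarrow> \<not> P (Suc k) \<Longrightarrow> 1 \<le> (F k - F (Suc k)) * A"
  shows "\<exists>n\<ge>1. P n \<and> (\<forall>k\<in>{1..<n}. \<not> P k) \<and> real n \<le> (F 1 - Finf) * A + 2"
proof -
  have count: "real n \<le> (F 1 - Finf) * A + 1" if "1 \<le> n" "\<forall>k\<in>{1..n}. \<not> P k" for n
  proof -
    have "real n - 1 = (\<Sum>k\<in>{1..<n}. 1)"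
      using \<open>1 \<le> n\<close> by simp
    also have "\<dots> \<le> (\<Sum>k\<in>{1..<n}. (F k - F (Suc k)) * A)"
      using decrease that by (intro sum_mono) auto
    also have "\<dots> = (\<Sum>k\<in>{1..<n}. F k - F (Suc k)) * A"
      by (simp add: sum_distrib_right)
    also have "(\<Sum>k\<in>{1..<n}. F k - F (Suc k)) = F 1 - F n"
      using \<open>1 \<le> n\<close> by (induction n rule: nat_induct_at_least) auto
    also have "(F 1 - F n) * A \<le> (F 1 - Finf) * A"
      using lower[of n] \<open>0 \<le> A\<close> by (intro mult_right_mono) auto
    finally show ?thesis
      by simp
  qed
  have "\<exists>n\<ge>1. P n"
  proof (rule ccontr)
    assume "\<not> (\<exists>n\<ge>1. P n)"
    define N where "N = nat \<lceil>(F 1 - Finf) * A\<rceil> + 2"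
    have "real N \<le> (F 1 - Finf) * A + 1"
      using count[of N] \<open>\<not> (\<exists>n\<ge>1. P n)\<close> by (auto simp: N_def)
    moreover have "(F 1 - Finf) * A + 2 \<le> real N"
      using of_nat_ceiling[of "(F 1 - Finf) * A"] by (simp add: N_def)
    ultimately show False
      by linarith
  qed
  define n where "n = (LEAST n. 1 \<le> n \<and> P n)"
  have n: "1 \<le> n \<and> P n"
    unfolding n_def by (rule LeastI_ex) fact
  have before: "\<forall>k\<in>{1..<n}. \<not> P k"
  proof
    fix k
    assume "k \<in> {1..<n}"
    then have "\<not> (1 \<le> k \<and> P k)"
      unfolding n_def by (intro not_less_Least) auto
    then show "\<not> P k"
      using \<open>k \<in> {1..<n}\<close> by simp
  qed
  have "real n \<le> (F 1 - Finf) * A + 2"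
  proof (cases "n = 1")
    case True
    then show ?thesis
      using lower[of 1] \<open>0 \<le> A\<close> by simp
  next
    case False
    with n before have "real (n - 1) \<le> (F 1 - Finf) * A + 1"
      by (intro count) auto
    then show ?thesis
      using n by (simp add: of_nat_diff)
  qed
  then show ?thesis
    using n before by blast
qed

definition descent_rate :: "real \<Rightarrow> real \<Rightarrow> real \<Rightarrow> real \<Rightarrow> real \<Rightarrow> real" where
  "descent_rate m beta rho eta eps =
     2 * (m + rho) ^ 2 / ((m + beta * rho) * eta ^ 2) + (1 - beta) / (beta * eps)"

definition trial_bound :: "real \<Rightarrow> real \<Rightarrow> real \<Rightarrow> real \<Rightarrow> real \<Rightarrow> real \<Rightarrow> real" where
  "trial_bound m beta rho L eta eps =
     8 / ((1 - beta) ^ 2 * rho) * (1 + m / rho) ^ 2 * L ^ 2 * max (2 * rho / eta ^ 2) (1 / eps)"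

lemma trial_bound_nonneg:
  assumes "0 < rho" "0 < eps"
  shows "0 \<le> trial_bound m beta rho L eta eps"
proof -
  have "0 \<le> max (2 * rho / eta ^ 2) (1 / eps)"
    using assms by (simp add: le_max_iff_disj)
  then show ?thesis
    unfolding trial_bound_def using assms by (intro mult_nonneg_nonneg divide_nonneg_nonneg) auto
qed

lemma Kmax_eq_descent_rate:
  assumes "0 < beta" "0 < eps"
  shows "Kmax m beta rho gap eta eps = \<lceil>gap * descent_rate m beta rho eta eps + 1\<rceil>"
proof -
  have "2 * (m + rho) ^ 2 * gap / (m + beta * rho) * (1 / eta ^ 2) + (1 - beta) * gap / beta * (1 / eps)
      = gap * descent_rate m beta rho eta eps"
    using assms by (simp add: descent_rate_def field_simps)
  then show ?thesis
    by (simp add: Kmax_def)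
qed

lemma descent_rate_nonneg:
  assumes "0 \<le> m" "0 < beta" "beta < 1" "0 < rho" "0 < eps"
  shows "0 \<le> descent_rate m beta rho eta eps"
  using assms by (simp add: descent_rate_def add_nonneg_pos)

text \<open>
  Here D is the decrease f x - f z of one outer step, r = norm (x - z)^2, and e is the error of the
  approximate subgradient (m + \<rho>) (x - z) at z; the two alternatives of the last hypothesis are the
  two ways in which z can fail to be (\<eta>, \<epsilon>)-stationary.
\<close>
lemma one_le_decrease_mult_descent_rate:
  assumes "0 \<le> m" "0 < beta" "beta < 1" "0 < rho" "0 < eta" "0 < eps" "0 \<le> r"
    and D_ge: "(m + beta * rho) / 2 * r \<le> D" and error_le: "beta * e \<le> (1 - beta) * D"
    and not_small: "eps < e \<or> eta ^ 2 < (m + rho) ^ 2 * r"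
  shows "1 \<le> D * descent_rate m beta rho eta eps"
proof -
  define A where "A = 2 * (m + rho) ^ 2 / ((m + beta * rho) * eta ^ 2)"
  define B where "B = (1 - beta) / (beta * eps)"
  have "0 < m + beta * rho"
    using assms by (simp add: add_nonneg_pos)
  have "0 \<le> A" "0 \<le> B" "0 \<le> D"
    using assms \<open>0 < m + beta * rho\<close> by (auto simp: A_def B_def intro: order.trans[OF _ D_ge])
  from not_small have "1 \<le> D * A \<or> 1 \<le> D * B"
  proof
    assume "eps < e"
    then have "beta * eps < beta * e"
      using \<open>0 < beta\<close> by simp
    then have "beta * eps < (1 - beta) * D"
      using error_le by linarith
    then show ?thesis
      using assms by (simp add: B_def field_simps)
  next
    assume "eta ^ 2 < (m + rho) ^ 2 * r"
    have "K / 2 * r * (2 * (m + rho) ^ 2 / (K * eta ^ 2)) = (m + rho) ^ 2 * r / eta ^ 2"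
      if "0 < K" for K
      using that \<open>0 < eta\<close> by (simp add: field_simps)
    then have "(m + beta * rho) / 2 * r * A = (m + rho) ^ 2 * r / eta ^ 2"
      using \<open>0 < m + beta * rho\<close> by (simp add: A_def)
    moreover have "(m + beta * rho) / 2 * r * A \<le> D * A"
      using D_ge \<open>0 \<le> A\<close> by (rule mult_right_mono)
    moreover have "1 < (m + rho) ^ 2 * r / eta ^ 2"
      using \<open>eta ^ 2 < (m + rho) ^ 2 * r\<close> \<open>0 < eta\<close> by simp
    ultimately show ?thesis
      by linarith
  qed
  then show ?thesis
    using \<open>0 \<le> A\<close> \<open>0 \<le> B\<close> \<open>0 \<le> D\<close>
    by (auto simp: descent_rate_def A_def[symmetric] B_def[symmetric] distrib_left
        intro: add_increasing add_increasing2)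
qed

locale prox_descent_call =
  fixes m beta rho L :: real
    and f :: "'a::euclidean_space \<Rightarrow> real"
    and x :: 'a and g :: "nat \<Rightarrow> 'a" and ft :: "nat \<Rightarrow> 'a \<Rightarrow> real" and z :: "nat \<Rightarrow> 'a"
  assumes m_nonneg: "0 \<le> m" and lipschitz: "lipschitz_on L UNIV f"
    and beta_pos: "0 < beta" and beta_less_one: "beta < 1" and rho_pos: "0 < rho"
    and run: "prox_descent_run m beta rho f x g ft z"
begin

text \<open>
  As long as \<open>reached j\<close> holds, the loop has not exited before iteration j, so the model ft j and
  the trial point z (j + 1) are really produced by the method; beyond the exit the run is arbitrary.
\<close>
definition reached :: "nat \<Rightarrow> bool" where
  "reached j \<longleftrightarrow> (\<forall>i\<in>{1..<j}. loop_test m beta f x ft z i)"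

definition model_gap :: "nat \<Rightarrow> real" where
  "model_gap j = f x - (ft j (z (Suc j)) + rho / 2 * norm (z (Suc j) - x) ^ 2)"

definition gap_decay :: real where
  "gap_decay = (1 - beta) ^ 2 * rho ^ 3 / (8 * (m + rho) ^ 2 * L ^ 2)"

lemma L_nonneg: "0 \<le> L"
  using lipschitz by (simp add: lipschitz_on_def)

lemma reached_one: "reached 1"
  by (simp add: reached_def)

lemma reached_mono: "i \<le> j \<Longrightarrow> reached j \<Longrightarrow> reached i"
  by (auto simp: reached_def)

lemma model:
  assumes "1 \<le> j" "reached j"
  shows "convex_on UNIV (ft j)" and "ft j u \<le> f u + m / 2 * norm (u - x) ^ 2"
    and "prox_min rho x (ft j) (z (Suc j))"
proof -
  show "prox_min rho x (ft j) (z (Suc j))"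
    using run assms unfolding prox_descent_run_def reached_def by blast
  have "convex_on UNIV (ft j) \<and> (\<forall>u. ft j u \<le> f u + m / 2 * norm (u - x) ^ 2)"
  proof (cases "j = 1")
    case True
    have ft1: "ft 1 = (\<lambda>u. f x + inner (g 1) (u - x))" and "g 1 \<in> wsubdiff m f x"
      using run unfolding prox_descent_run_def by auto
    moreover have "convex_on UNIV (ft 1)"
      unfolding ft1 by (rule convex_onI) (auto simp: inner_add_right inner_diff_right algebra_simps)
    ultimately show ?thesis
      using True by (auto simp: wsubdiff_def algebra_simps)
  next
    case False
    then obtain i where i: "j = Suc i" "1 \<le> i"
      using assms(1) by (cases j) auto
    with assms(2) have "\<forall>k\<in>{1..i}. loop_test m beta f x ft z k"
      by (auto simp: reached_def)
    then show ?thesis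
      using run i unfolding prox_descent_run_def by blast
  qed
  then show "convex_on UNIV (ft j)" "ft j u \<le> f u + m / 2 * norm (u - x) ^ 2"
    by auto
qed

lemma model_ge_cut:
  assumes "1 \<le> j" "reached j"
  shows "ft j (z (Suc j)) + inner (rho *\<^sub>R (x - z (Suc j))) (u - z (Suc j)) \<le> ft j u"
  using prox_min_optimality[OF model(1,3)[OF assms] rho_pos] .

lemma trial_step_le:
  assumes "1 \<le> j" "reached j"
  shows "rho * norm (z (Suc j) - x) ^ 2 \<le> f x - ft j (z (Suc j))"
proof -
  have "inner (rho *\<^sub>R (x - z (Suc j))) (x - z (Suc j)) = rho * norm (z (Suc j) - x) ^ 2"
    by (simp add: power2_norm_eq_inner norm_minus_commute[of "z (Suc j)" x])
  moreover have "ft j x \<le> f x"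
    using model(2)[OF assms, of x] by simp
  ultimately show ?thesis
    using model_ge_cut[OF assms, of x] by linarith
qed

lemma trial_dist_le_model_gap:
  assumes "1 \<le> j" "reached j"
  shows "rho / 2 * norm (z (Suc j) - x) ^ 2 \<le> model_gap j"
  using trial_step_le[OF assms] by (simp add: model_gap_def)

lemma model_gap_nonneg:
  assumes "1 \<le> j" "reached j"
  shows "0 \<le> model_gap j"
proof -
  have "0 \<le> rho / 2 * norm (z (Suc j) - x) ^ 2"
    using rho_pos by simp
  then show ?thesis
    using trial_dist_le_model_gap[OF assms] by linarith
qed

lemma prox_gradient_esubdiff:
  assumes "1 \<le> j" "reached j"
  shows "rho *\<^sub>R (x - z (Suc j)) \<in> esubdiff m (model_gap j - rho / 2 * norm (z (Suc j) - x) ^ 2) f x"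
  unfolding esubdiff_def
proof safe
  fix u
  let ?y = "z (Suc j)" and ?s = "rho *\<^sub>R (x - z (Suc j))"
  have "inner ?s (u - ?y) = inner ?s (u - x) + rho * norm (?y - x) ^ 2"
    by (simp add: inner_diff_right power2_norm_eq_inner norm_minus_commute[of ?y x] algebra_simps)
  then show "f x + inner ?s (u - x) - m / 2 * norm (u - x) ^ 2
      - (model_gap j - rho / 2 * norm (?y - x) ^ 2) \<le> f u"
    using model_ge_cut[OF assms, of u] model(2)[OF assms, of u] by (simp add: model_gap_def)
qed

lemma stationary_of_small_model_gap:
  assumes "1 \<le> j" "reached j" "0 \<le> eta"
    and "model_gap j \<le> eps" "2 * rho * model_gap j \<le> eta ^ 2"
  shows "inexact_stationary m f eta eps x"
proof (rule inexact_stationaryI[OF prox_gradient_esubdiff[OF assms(1,2)]])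
  have "0 \<le> rho / 2 * norm (z (Suc j) - x) ^ 2"
    using rho_pos by simp
  then show "model_gap j - rho / 2 * norm (z (Suc j) - x) ^ 2 \<le> eps"
    using assms(4) by linarith
  have "norm (rho *\<^sub>R (x - z (Suc j))) ^ 2 = 2 * rho * (rho / 2 * norm (z (Suc j) - x) ^ 2)"
    using rho_pos by (simp add: norm_minus_commute[of x] power_mult_distrib power2_eq_square)
  also have "\<dots> \<le> 2 * rho * model_gap j"
    using trial_dist_le_model_gap[OF assms(1,2)] rho_pos by (intro mult_left_mono) auto
  also have "\<dots> \<le> eta ^ 2"
    by (rule assms(5))
  finally show "norm (rho *\<^sub>R (x - z (Suc j))) \<le> eta"
    using assms(3) by (rule power2_le_imp_le)
qed

lemma trial_esubdiff:
  assumes "1 \<le> j" "reached j"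
  defines "y \<equiv> z (Suc j)"
  shows "(m + rho) *\<^sub>R (x - y) \<in> esubdiff m (f y + m / 2 * norm (y - x) ^ 2 - ft j y) f y"
  unfolding esubdiff_def
proof safe
  fix u
  define P where "P = inner (x - y) (u - y)"
  have "norm (u - x) ^ 2 = norm ((u - y) + (y - x)) ^ 2"
    by simp
  also have "\<dots> = norm (u - y) ^ 2 - 2 * P + norm (y - x) ^ 2"
    unfolding power2_norm_add P_def by (simp add: inner_commute inner_minus_right[symmetric])
  finally have dist_u: "norm (u - x) ^ 2 = norm (u - y) ^ 2 - 2 * P + norm (y - x) ^ 2" .
  have "m / 2 * norm (u - x) ^ 2 = m / 2 * norm (u - y) ^ 2 - m * P + m / 2 * norm (y - x) ^ 2"
    unfolding dist_u by (simp add: algebra_simps)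
  moreover have "ft j y + rho * P \<le> ft j u"
    using model_ge_cut[OF assms(1,2), of u] by (simp add: y_def P_def)
  ultimately show "f y + inner ((m + rho) *\<^sub>R (x - y)) (u - y) - m / 2 * norm (u - y) ^ 2
      - (f y + m / 2 * norm (y - x) ^ 2 - ft j y) \<le> f u"
    using model(2)[OF assms(1,2), of u] by (simp add: P_def algebra_simps)
qed

lemma next_model:
  assumes "1 \<le> j" "reached (Suc j)"
  shows "ft j (z (Suc j)) + inner (rho *\<^sub>R (x - z (Suc j))) (u - z (Suc j)) \<le> ft (Suc j) u"
    and "f (z (Suc j)) + m / 2 * norm (z (Suc j) - x) ^ 2 + inner (g (Suc j)) (u - z (Suc j))
           \<le> ft (Suc j) u"
    and "g (Suc j) - m *\<^sub>R (z (Suc j) - x) \<in> wsubdiff m f (z (Suc j))"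
proof -
  have "\<forall>i\<in>{1..j}. loop_test m beta f x ft z i"
    using assms(2) by (auto simp: reached_def)
  then show "ft j (z (Suc j)) + inner (rho *\<^sub>R (x - z (Suc j))) (u - z (Suc j)) \<le> ft (Suc j) u"
    and "f (z (Suc j)) + m / 2 * norm (z (Suc j) - x) ^ 2 + inner (g (Suc j)) (u - z (Suc j))
           \<le> ft (Suc j) u"
    and "g (Suc j) - m *\<^sub>R (z (Suc j) - x) \<in> wsubdiff m f (z (Suc j))"
    using run assms(1) unfolding prox_descent_run_def by blast+
qed

text \<open>
  The new prox value dominates both the old one (cut (ii)) and the linearisation at z (j + 1)
  (cut (iii)); mixing the two cuts with weight lam and completing the square gives the bound.
\<close>
lemma model_gap_Suc_le:
  assumes j: "1 \<le> j" "reached (Suc j)" and lam: "0 \<le> lam" "lam \<le> 1"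
  shows "model_gap (Suc j) \<le> model_gap j - lam * ((1 - beta) * model_gap j)
           + lam ^ 2 * norm (g (Suc j) - rho *\<^sub>R (x - z (Suc j))) ^ 2 / (2 * rho)"
proof -
  define y where "y = z (Suc j)"
  define d where "d = z (Suc (Suc j)) - y"
  define h where "h = g (Suc j) - rho *\<^sub>R (x - y)"
  define r where "r = norm (y - x) ^ 2"
  define prox where "prox = f x - model_gap j"
  define prox' where "prox' = f x - model_gap (Suc j)"
  have dist_next: "norm (z (Suc (Suc j)) - x) ^ 2 = norm d ^ 2 + 2 * inner d (y - x) + r"
    unfolding d_def r_def by (metis diff_add_cancel add_diff_eq power2_norm_add)
  have "rho / 2 * norm (z (Suc (Suc j)) - x) ^ 2 = rho / 2 * norm d ^ 2 + rho * inner d (y - x) + rho / 2 * r"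
    unfolding dist_next by (simp add: algebra_simps)
  moreover have "inner (rho *\<^sub>R (x - y)) d = - (rho * inner d (y - x))"
    by (simp add: inner_commute inner_diff_left inner_diff_right algebra_simps)
  moreover have "inner h d = inner (g (Suc j)) d + rho * inner d (y - x)"
    unfolding h_def using calculation(2) by (simp add: inner_diff_left)
  moreover have "ft j y + inner (rho *\<^sub>R (x - y)) d \<le> ft (Suc j) (z (Suc (Suc j)))"
    and "f y + m / 2 * r + inner (g (Suc j)) d \<le> ft (Suc j) (z (Suc (Suc j)))"
    using next_model(1,2)[OF j, of "z (Suc (Suc j))"] by (simp_all add: y_def d_def r_def)
  moreover have prox: "prox = ft j y + rho / 2 * r"
    by (simp add: prox_def model_gap_def y_def r_def)
  moreover have "prox' = ft (Suc j) (z (Suc (Suc j))) + rho / 2 * norm (z (Suc (Suc j)) - x) ^ 2"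
    by (simp add: prox'_def model_gap_def)
  ultimately have old_cut: "prox + rho / 2 * norm d ^ 2 \<le> prox'"
    and new_cut: "f y + m / 2 * r + rho / 2 * r + inner h d + rho / 2 * norm d ^ 2 \<le> prox'"
    by linarith+
  have "(1 - lam) * (prox + rho / 2 * norm d ^ 2)
      + lam * (f y + m / 2 * r + rho / 2 * r + inner h d + rho / 2 * norm d ^ 2) \<le> prox'"
    using old_cut new_cut lam by (intro convex_bound_le) auto
  then have mixed: "prox + lam * (f y + m / 2 * r + rho / 2 * r - prox)
      + (rho / 2 * norm d ^ 2 + lam * inner h d) \<le> prox'"
    by (simp add: algebra_simps diff_divide_distrib)
  have "f x - (f y + m / 2 * r) < beta * (f x - ft j y)"
    using j by (simp add: reached_def loop_test_def y_def r_def)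
  moreover have "(1 - beta) * model_gap j \<le> (1 - beta) * (f x - ft j y)"
    using beta_less_one trial_dist_le_model_gap[OF j(1) reached_mono[OF _ j(2)]] rho_pos
    by (intro mult_left_mono) (auto simp: model_gap_def y_def)
  ultimately have "(1 - beta) * model_gap j \<le> f y + m / 2 * r + rho / 2 * r - prox"
    unfolding prox by (simp add: algebra_simps)
  then have "lam * ((1 - beta) * model_gap j) \<le> lam * (f y + m / 2 * r + rho / 2 * r - prox)"
    using lam by (intro mult_left_mono) auto
  moreover have "- (lam ^ 2 * norm h ^ 2 / (2 * rho)) \<le> rho / 2 * norm d ^ 2 + lam * inner h d"
    using complete_square_lower_bound[OF rho_pos] .
  moreover have "model_gap j = f x - prox" "model_gap (Suc j) = f x - prox'"
    by (simp_all add: prox_def prox'_def)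
  ultimately show ?thesis
    using mixed unfolding h_def y_def by linarith
qed

lemma model_gap_one_le: "model_gap 1 \<le> L ^ 2 / (2 * rho)"
proof -
  have ft1: "ft 1 = (\<lambda>u. f x + inner (g 1) (u - x))" and "g 1 \<in> wsubdiff m f x"
    using run unfolding prox_descent_run_def by auto
  have "model_gap 1 = - (rho / 2 * norm (z 2 - x) ^ 2 + 1 * inner (g 1) (z 2 - x))"
    unfolding model_gap_def ft1 numeral_2_eq_2 by simp
  also have "\<dots> \<le> 1 ^ 2 * norm (g 1) ^ 2 / (2 * rho)"
    using complete_square_lower_bound[OF rho_pos, where lam = 1 and h = "g 1" and d = "z 2 - x"]
    by linarith
  also have "\<dots> \<le> L ^ 2 / (2 * rho)"
    using wsubdiff_norm_le_lipschitz[OF lipschitz \<open>g 1 \<in> wsubdiff m f x\<close> m_nonneg] rho_pos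
    by (auto intro!: divide_right_mono power_mono)
  finally show ?thesis .
qed

lemma model_gap_le_first:
  assumes "1 \<le> j" "reached j"
  shows "model_gap j \<le> L ^ 2 / (2 * rho)"
  using assms
proof (induction j rule: nat_induct_at_least)
  case base
  show ?case
    by (rule model_gap_one_le)
next
  case (Suc j)
  have "model_gap (Suc j) \<le> model_gap j"
    using model_gap_Suc_le[OF Suc.hyps Suc.prems, of 0] by simp
  then show ?case
    using Suc.IH reached_mono[OF _ Suc.prems, of j] by simp
qed

lemma aggregate_direction_norm_le:
  assumes "1 \<le> j" "reached (Suc j)"
  shows "norm (g (Suc j) - rho *\<^sub>R (x - z (Suc j))) \<le> 2 * (m + rho) * L / rho"
proof -
  let ?y = "z (Suc j)"
  have "reached j"
    using reached_mono[OF _ assms(2)] by simp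
  have "rho / 2 * norm (?y - x) ^ 2 \<le> model_gap j"
    by (rule trial_dist_le_model_gap[OF assms(1) \<open>reached j\<close>])
  also have "\<dots> \<le> L ^ 2 / (2 * rho)"
    by (rule model_gap_le_first[OF assms(1) \<open>reached j\<close>])
  finally have "norm (?y - x) ^ 2 \<le> (L / rho) ^ 2"
    using rho_pos by (simp add: field_simps power_divide power2_eq_square)
  moreover have "0 \<le> L / rho"
    using L_nonneg rho_pos by simp
  ultimately have "norm (?y - x) \<le> L / rho"
    by (rule power2_le_imp_le)
  then have "(m + rho) * norm (?y - x) \<le> (m + rho) * (L / rho)"
    using m_nonneg rho_pos by (intro mult_left_mono) auto
  have decomp: "g (Suc j) - rho *\<^sub>R (x - ?y) = (g (Suc j) - m *\<^sub>R (?y - x)) + (m + rho) *\<^sub>R (?y - x)"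
    by (simp add: algebra_simps)
  have "norm (g (Suc j) - rho *\<^sub>R (x - ?y))
      \<le> norm (g (Suc j) - m *\<^sub>R (?y - x)) + norm ((m + rho) *\<^sub>R (?y - x))"
    unfolding decomp by (rule norm_triangle_ineq)
  moreover have "norm (g (Suc j) - m *\<^sub>R (?y - x)) \<le> L"
    using wsubdiff_norm_le_lipschitz[OF lipschitz next_model(3)[OF assms] m_nonneg] .
  moreover have "norm ((m + rho) *\<^sub>R (?y - x)) = (m + rho) * norm (?y - x)"
    using m_nonneg rho_pos by simp
  moreover have "L \<le> (m + rho) * (L / rho)"
    using m_nonneg rho_pos L_nonneg by (simp add: field_simps)
  moreover have "2 * (m + rho) * L / rho = 2 * ((m + rho) * (L / rho))"
    by simp
  ultimately show ?thesis
    using \<open>(m + rho) * norm (?y - x) \<le> (m + rho) * (L / rho)\<close> by linarith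
qed

lemma model_gap_quadratic_decrease:
  assumes "0 < L" "1 \<le> j" "reached (Suc j)"
  shows "model_gap (Suc j) \<le> model_gap j - gap_decay * model_gap j ^ 2"
proof -
  define G where "G = 2 * (m + rho) * L / rho"
  define D where "D = model_gap j"
  define lam where "lam = (1 - beta) * D * rho / G ^ 2"
  have "0 < G"
    using assms(1) m_nonneg rho_pos by (simp add: G_def)
  have "reached j"
    using reached_mono[OF _ assms(3)] by simp
  then have D: "0 \<le> D" "D \<le> L ^ 2 / (2 * rho)"
    using model_gap_nonneg model_gap_le_first assms(2) by (simp_all add: D_def)
  have "4 * L ^ 2 \<le> G ^ 2"
  proof -
    have "2 * L \<le> G"
      using m_nonneg rho_pos assms(1) by (simp add: G_def field_simps)
    then show ?thesis
      using power_mono[of "2 * L" G 2] assms(1) by (simp add: power_mult_distrib)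
  qed
  have "(1 - beta) * D * rho \<le> 1 * (L ^ 2 / (2 * rho)) * rho"
    using beta_pos beta_less_one D rho_pos by (intro mult_right_mono mult_mono) auto
  moreover have "1 * (L ^ 2 / (2 * rho)) * rho = L ^ 2 / 2"
    using rho_pos by simp
  ultimately have "(1 - beta) * D * rho \<le> G ^ 2"
    using \<open>4 * L ^ 2 \<le> G ^ 2\<close> zero_le_power2[of L] by linarith
  moreover have "0 \<le> (1 - beta) * D * rho"
    using D beta_less_one rho_pos by simp
  ultimately have lam: "0 \<le> lam" "lam \<le> 1"
    using \<open>0 < G\<close> by (simp_all add: lam_def divide_le_eq_1)
  have "norm (g (Suc j) - rho *\<^sub>R (x - z (Suc j))) ^ 2 \<le> G ^ 2"
    using aggregate_direction_norm_le[OF assms(2,3)] by (simp add: G_def power_mono)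
  then have "lam ^ 2 * norm (g (Suc j) - rho *\<^sub>R (x - z (Suc j))) ^ 2 / (2 * rho)
      \<le> lam ^ 2 * G ^ 2 / (2 * rho)"
    using rho_pos by (intro divide_right_mono mult_left_mono) auto
  then have "model_gap (Suc j) \<le> D - lam * ((1 - beta) * D) + lam ^ 2 * G ^ 2 / (2 * rho)"
    using model_gap_Suc_le[OF assms(2,3) lam] unfolding D_def by linarith
  also have "\<dots> = D - (1 - beta) ^ 2 * rho / (2 * G ^ 2) * D ^ 2"
    using \<open>0 < G\<close> rho_pos by (simp add: lam_def field_simps power2_eq_square)
  also have "(1 - beta) ^ 2 * rho / (2 * G ^ 2) = gap_decay"
    using assms(1) m_nonneg rho_pos
    by (simp add: G_def gap_decay_def field_simps power2_eq_square power3_eq_cube)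
  finally show ?thesis
    by (simp add: D_def)
qed

lemma gap_decay_mult_index_le:
  assumes "0 < L" "1 \<le> j" "reached j"
  shows "gap_decay * real j * model_gap j \<le> 1"
proof (rule index_mult_le_one_of_quadratic_decrease[OF _ _ assms(2)])
  show "0 \<le> gap_decay"
    using rho_pos by (simp add: gap_decay_def)
  have "(1 - beta) ^ 2 * rho ^ 2 \<le> 1 * (m + rho) ^ 2"
    using beta_pos beta_less_one m_nonneg rho_pos
    by (intro mult_mono power_mono) (auto simp: power_le_one)
  then have "(1 - beta) ^ 2 * rho ^ 2 \<le> 16 * (m + rho) ^ 2"
    using zero_le_power2[of "m + rho"] by linarith
  moreover have "gap_decay * (L ^ 2 / (2 * rho)) = (1 - beta) ^ 2 * rho ^ 2 / (16 * (m + rho) ^ 2)"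
    using assms(1) m_nonneg rho_pos
    by (simp add: gap_decay_def field_simps) (simp add: power2_eq_square power3_eq_cube)
  ultimately have "gap_decay * (L ^ 2 / (2 * rho)) \<le> 1"
    using m_nonneg rho_pos by (simp add: divide_le_eq_1)
  then show "gap_decay * model_gap 1 \<le> 1"
    using mult_left_mono[OF model_gap_one_le \<open>0 \<le> gap_decay\<close>] by linarith
  show "0 \<le> model_gap i \<and> model_gap (Suc i) \<le> model_gap i - gap_decay * model_gap i ^ 2"
    if "1 \<le> i" "i < j" for i
    using that assms model_gap_nonneg model_gap_quadratic_decrease reached_mono
    by (meson Suc_leI less_imp_le)
qed

lemma num_trials_exit:
  assumes "prox_terminates m beta f x ft z"
  defines "T \<equiv> num_trials m beta f x ft z"
  shows "1 \<le> T" and "\<not> loop_test m beta f x ft z T" and "reached T"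
proof -
  have "\<exists>j\<ge>1. \<not> loop_test m beta f x ft z j"
    using assms(1) unfolding prox_terminates_def .
  from LeastI_ex[OF this] show "1 \<le> T" "\<not> loop_test m beta f x ft z T"
    unfolding T_def num_trials_def by auto
  show "reached T"
    unfolding reached_def T_def num_trials_def
    by (auto dest: not_less_Least)
qed

lemma model_gap_gt_of_not_stationary:
  assumes "\<not> inexact_stationary m f eta eps x" "0 < eta" "1 \<le> j" "reached j"
  shows "min eps (eta ^ 2 / (2 * rho)) < model_gap j"
proof (rule ccontr)
  assume "\<not> ?thesis"
  then have "model_gap j \<le> eps" "model_gap j \<le> eta ^ 2 / (2 * rho)"
    by simp_all
  then have "model_gap j \<le> eps" "2 * rho * model_gap j \<le> eta ^ 2"
    using rho_pos by (simp_all add: field_simps)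
  then show False
    using stationary_of_small_model_gap[OF assms(3,4)] assms(1,2) by auto
qed

lemma reached_index_lt_trial_bound:
  assumes "\<not> inexact_stationary m f eta eps x" "0 < eta" "0 < eps" "1 \<le> j" "reached j"
  shows "real j < trial_bound m beta rho L eta eps"
proof -
  define tau where "tau = min eps (eta ^ 2 / (2 * rho))"
  have tau: "0 < tau" "tau < model_gap j"
    using model_gap_gt_of_not_stationary[OF assms(1,2,4,5)] assms(2,3) rho_pos
    by (simp_all add: tau_def)
  have "tau < L ^ 2 / (2 * rho)"
    using model_gap_gt_of_not_stationary[OF assms(1,2) _ reached_one] model_gap_one_le
    by (simp add: tau_def)
  then have "0 < L"
    using tau(1) L_nonneg by (cases "L = 0") auto
  then have "0 < gap_decay"
    using m_nonneg rho_pos beta_less_one by (simp add: gap_decay_def)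
  have "gap_decay * real j * tau < gap_decay * real j * model_gap j"
    using tau \<open>0 < gap_decay\<close> assms(4) by (intro mult_strict_left_mono) auto
  also have "\<dots> \<le> 1"
    by (rule gap_decay_mult_index_le[OF \<open>0 < L\<close> assms(4,5)])
  finally have "real j < 1 / (gap_decay * tau)"
    using \<open>0 < gap_decay\<close> tau(1) by (simp add: field_simps)
  have "1 / tau = max (2 * rho / eta ^ 2) (1 / eps)"
    using assms(2,3) rho_pos by (auto simp: tau_def min_def max_def field_simps)
  moreover have "1 / gap_decay = 8 / ((1 - beta) ^ 2 * rho) * (1 + m / rho) ^ 2 * L ^ 2"
    using \<open>0 < L\<close> m_nonneg rho_pos beta_less_one
    by (simp add: gap_decay_def field_simps) (simp add: power2_eq_square power3_eq_cube)
  ultimately have "trial_bound m beta rho L eta eps = 1 / gap_decay * (1 / tau)"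
    by (simp add: trial_bound_def)
  then show ?thesis
    using \<open>real j < 1 / (gap_decay * tau)\<close> by simp
qed

lemma terminates_of_not_stationary:
  assumes "\<not> inexact_stationary m f eta eps x" "0 < eta" "0 < eps"
  shows "prox_terminates m beta f x ft z"
proof (rule ccontr)
  assume "\<not> prox_terminates m beta f x ft z"
  then have "reached j" for j
    by (auto simp: prox_terminates_def reached_def)
  define j where "j = nat \<lceil>trial_bound m beta rho L eta eps\<rceil> + 1"
  have "real j < trial_bound m beta rho L eta eps"
    using reached_index_lt_trial_bound[OF assms _ \<open>reached j\<close>] by (simp add: j_def)
  then show False
    using of_nat_ceiling[of "trial_bound m beta rho L eta eps"] by (simp add: j_def)
qed

lemma num_trials_lt_trial_bound:
  assumes "\<not> inexact_stationary m f eta eps x" "0 < eta" "0 < eps"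
  shows "real (num_trials m beta f x ft z) < trial_bound m beta rho L eta eps"
  using reached_index_lt_trial_bound[OF assms] num_trials_exit[OF terminates_of_not_stationary[OF assms]]
  by blast

lemma sufficient_decrease:
  assumes "prox_terminates m beta f x ft z" "0 < eta" "0 < eps"
  defines "y \<equiv> z (Suc (num_trials m beta f x ft z))"
  assumes "\<not> inexact_stationary m f eta eps y"
  shows "1 \<le> (f x - f y) * descent_rate m beta rho eta eps"
proof -
  define T where "T = num_trials m beta f x ft z"
  define r where "r = norm (y - x) ^ 2"
  define e where "e = f y + m / 2 * r - ft T y"
  have T: "1 \<le> T" "\<not> loop_test m beta f x ft z T" "reached T"
    using num_trials_exit[OF assms(1)] by (simp_all add: T_def)
  have exit: "beta * (f x - ft T y) \<le> f x - (f y + m / 2 * r)"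
    using T(2) by (simp add: loop_test_def y_def T_def r_def)
  have "beta * (rho * r) \<le> beta * (f x - ft T y)"
    using trial_step_le[OF T(1,3)] beta_pos by (simp add: y_def T_def r_def)
  moreover have "0 \<le> beta * (rho * r)" "0 \<le> m * r"
    using beta_pos rho_pos m_nonneg by (simp_all add: r_def)
  moreover have "(m + beta * rho) / 2 * r = m / 2 * r + beta * (rho * r) / 2"
    by (simp add: field_simps)
  ultimately have D_ge: "(m + beta * rho) / 2 * r \<le> f x - f y"
    using exit by linarith
  have error_le: "beta * e \<le> (1 - beta) * (f x - f y)"
    using exit \<open>0 \<le> m * r\<close> beta_less_one mult_left_mono[of 0 "m * r" "1 - beta"]
    by (simp add: e_def algebra_simps)
  have "(m + rho) *\<^sub>R (x - y) \<in> esubdiff m e f y"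
    using trial_esubdiff[OF T(1,3)] by (simp add: e_def r_def y_def T_def)
  moreover have "norm ((m + rho) *\<^sub>R (x - y)) = (m + rho) * norm (y - x)"
    using m_nonneg rho_pos by (simp add: norm_minus_commute[of x])
  ultimately have "eps < e \<or> eta < (m + rho) * norm (y - x)"
    using assms(5) inexact_stationaryI by (metis not_le)
  then have not_small: "eps < e \<or> eta ^ 2 < (m + rho) ^ 2 * r"
    using assms(2) power_strict_mono[of eta "(m + rho) * norm (y - x)" 2]
    by (auto simp: r_def power_mult_distrib)
  have "0 \<le> r"
    by (simp add: r_def)
  from one_le_decrease_mult_descent_rate[OF m_nonneg beta_pos beta_less_one rho_pos assms(2,3)
      this D_ge error_le not_small]
  show ?thesis .
qed

end

theorem mainTheorem10:
  fixes f :: "'a::euclidean_space \<Rightarrow> real"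
    and m L beta rho eta eps :: real
    and x :: "nat \<Rightarrow> 'a"
    and g :: "nat \<Rightarrow> nat \<Rightarrow> 'a"
    and ft :: "nat \<Rightarrow> nat \<Rightarrow> 'a \<Rightarrow> real"
    and z :: "nat \<Rightarrow> nat \<Rightarrow> 'a"
  assumes "m \<ge> 0"
    and "weakly_convex m f"
    and "lipschitz_on L UNIV f"
    and "bdd_below (range f)"
    and "0 < beta" and "beta < 1" and "rho > 0"
    and "eta > 0" and "eps > 0"
    and runs: "\<forall>k\<ge>1. prox_descent_run m beta rho f (x k) (g k) (ft k) (z k)"
    and next_iter: "\<forall>k\<ge>1. prox_terminates m beta f (x k) (ft k) (z k) \<longrightarrow>
             x (Suc k) = z k (Suc (num_trials m beta f (x k) (ft k) (z k)))"
  shows "\<exists>kstar\<ge>1.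
           inexact_stationary m f eta eps (x kstar) \<and>
           (\<forall>k\<in>{1..<kstar}. \<not> inexact_stationary m f eta eps (x k)) \<and>
           (\<forall>i\<in>{1..<kstar}. prox_terminates m beta f (x i) (ft i) (z i)) \<and>
           int kstar \<le> Kmax m beta rho (f (x 1) - (INF y. f y)) eta eps + 1 \<and>
           real (\<Sum>i\<in>{1..<kstar}. num_trials m beta f (x i) (ft i) (z i))
             \<le> 8 * real_of_int (Kmax m beta rho (f (x 1) - (INF y. f y)) eta eps)
                 / ((1 - beta) ^ 2 * rho) * (1 + m / rho) ^ 2 * L ^ 2
                 * max (2 * rho / eta ^ 2) (1 / eps)"
proof -
  let ?stat = "\<lambda>k. inexact_stationary m f eta eps (x k)"
  let ?T = "\<lambda>i. num_trials m beta f (x i) (ft i) (z i)"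
  let ?A = "descent_rate m beta rho eta eps"
  let ?K = "Kmax m beta rho (f (x 1) - (INF y. f y)) eta eps"
  let ?B = "trial_bound m beta rho L eta eps"
  have call: "prox_descent_call m beta rho L f (x k) (g k) (ft k) (z k)" if "1 \<le> k" for k
    using assms that by (simp add: prox_descent_call_def)
  have terminates: "prox_terminates m beta f (x k) (ft k) (z k)" if "1 \<le> k" "\<not> ?stat k" for k
    using prox_descent_call.terminates_of_not_stationary[OF call that(2)] that(1) assms(8,9) by blast
  have "1 \<le> (f (x k) - f (x (Suc k))) * ?A" if "1 \<le> k" "\<not> ?stat k" "\<not> ?stat (Suc k)" for k
    using prox_descent_call.sufficient_decrease[OF call terminates assms(8,9)] next_iter terminates
      that by simp
  moreover have "(INF y. f y) \<le> f (x k)" for k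
    using \<open>bdd_below (range f)\<close> by (simp add: cINF_lower)
  ultimately obtain n where n: "1 \<le> n" "?stat n" "\<forall>k\<in>{1..<n}. \<not> ?stat k"
    and "real n \<le> (f (x 1) - (INF y. f y)) * ?A + 2"
    using first_hit_index_le[where Finf = "INF y. f y" and F = "\<lambda>k. f (x k)" and A = ?A and P = ?stat]
      descent_rate_nonneg[OF assms(1,5,6,7,9)] by blast
  then have K: "real n - 1 \<le> real_of_int ?K"
    using le_of_int_ceiling[of "(f (x 1) - (INF y. f y)) * ?A + 1"]
    unfolding Kmax_eq_descent_rate[OF assms(5,9)] by linarith
  have "real (\<Sum>i\<in>{1..<n}. ?T i) \<le> (\<Sum>i\<in>{1..<n}. ?B)"
    unfolding of_nat_sum
    using prox_descent_call.num_trials_lt_trial_bound[OF call _ assms(8,9)] n(3)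
    by (intro sum_mono less_imp_le) auto
  also have "\<dots> = (real n - 1) * ?B"
    using n(1) by (simp add: of_nat_diff)
  also have "\<dots> \<le> real_of_int ?K * ?B"
    using K trial_bound_nonneg[OF assms(7,9)] by (rule mult_right_mono)
  finally have "real (\<Sum>i\<in>{1..<n}. ?T i) \<le> real_of_int ?K * ?B" .
  moreover have "int n \<le> ?K + 1"
    using K by linarith
  ultimately show ?thesis
    using n terminates by (intro exI[of _ n]) (auto simp: trial_bound_def algebra_simps)
qed

end
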